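(* For every $n\ge2$, $$E\Big[U^{(n)}\big(U^{(n)}-E[\tau^{(n)}\mid\mathcal{Y}_n]\big)\Big]=\frac{2n}{n-1}\Big(H_{n,1}+H_{n,2}-1-\frac{H_{n,1}^2}{n}\Big).$$
   Context: Fix $n\ge 2$. A Yule tree with speciation rate 1 on $n$ tips: start with a single lineage; each lineage independently splits into two at rate 1; the process is stopped just before the $n$-th speciation event, so the tree has $n$ tips and $n-1$ speciation (internal) nodes, numbered $1,\dots,n-1$ chronologically from the root. For $i=1,\dots,n$ let $T_i$ be the length of the time interval during which there are exactly $i$ lineages; the $T_i$ are independent, $T_i\sim\mathrm{Exp}(i)$ (rate $i$), the $k$-th speciation occurs at time $T_1+\dots+T_k$, and at each speciation the splitting lineage is uniformly chosen among current lineages, independently of the $T_i$. The tree height is $U^{(n)}=T_1+\dots+T_n$. Choose an unordered pair of distinct tips uniformly at random (independently of everything else given the tree) and let $\kappa_n\in\{1,\dots,n-1\}$ be the index of the speciation event at which their lineages split; the coalescent time of the pair is $\tau^{(n)}=T_{\kappa_n+1}+\dots+T_n$. $\mathcal{Y}_n$ is the σ-field generated by the tree (topology and all branch lengths, in particular $T_1,\dots,T_n$), so $E[\tau^{(n)}\mid\mathcal{Y}_n]$ is the average of the coalescent times over all $\binom n2$ pairs of tips. $H_{n,r}=\sum_{i=1}^n i^{-r}$. *)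

theory Defs
  imports "HOL-Probability.Probability"
begin

definition H :: "nat \<Rightarrow> nat \<Rightarrow> real" where
  "H n r = (\<Sum>i=1..n. 1 / real i ^ r)"

text \<open>Lineages present when there are k lineages
  are labelled 0,...,k-1. At the k-th speciation event (k = 1..n-1; there are
  k lineages) lineage c k (an element of {..<k}) splits into lineages c k and k.
  The n tips are the lineages 0,...,n-1. A topology is the choice function c.\<close>
definition yule_topologies :: "nat \<Rightarrow> (nat \<Rightarrow> nat) set" where
  "yule_topologies n = Pi\<^sub>E {1..n-1} (\<lambda>k. {..<k})"

text \<open>Going one level up (from k+1 lineages to k lineages): lineage k was
  created at event k from lineage c k; all other lineages keep their label.\<close>
definition lineage_down :: "(nat \<Rightarrow> nat) \<Rightarrow> nat \<Rightarrow> nat \<Rightarrow> nat" where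
  "lineage_down c k y = (if y = k then c k else y)"

text \<open>anc_steps c n x j: ancestor of tip x at the level with n - j lineages.\<close>
primrec anc_steps :: "(nat \<Rightarrow> nat) \<Rightarrow> nat \<Rightarrow> nat \<Rightarrow> nat \<Rightarrow> nat" where
  "anc_steps c n x 0 = x"
| "anc_steps c n x (Suc j) = lineage_down c (n - Suc j) (anc_steps c n x j)"

definition ancestor :: "(nat \<Rightarrow> nat) \<Rightarrow> nat \<Rightarrow> nat \<Rightarrow> nat \<Rightarrow> nat" where
  "ancestor c n k x = anc_steps c n x (n - k)"

text \<open>Index kappa of the speciation event at which the lineages of tips a and b
  split: the last level k (k lineages, k in 1..n-1) at which they share an ancestor.\<close>
definition split_event :: "(nat \<Rightarrow> nat) \<Rightarrow> nat \<Rightarrow> nat \<Rightarrow> nat \<Rightarrow> nat" where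
  "split_event c n a b = Max {k \<in> {1..n-1}. ancestor c n k a = ancestor c n k b}"

definition coal_time :: "nat \<Rightarrow> (nat \<Rightarrow> nat) \<Rightarrow> (nat \<Rightarrow> real) \<Rightarrow> nat \<Rightarrow> nat \<Rightarrow> real" where
  "coal_time n c T a b = (\<Sum>i\<in>{split_event c n a b + 1..n}. T i)"

text \<open>E[tau | Y_n]: average coalescent time over all unordered pairs of tips.\<close>
definition mean_coal_time :: "nat \<Rightarrow> (nat \<Rightarrow> nat) \<Rightarrow> (nat \<Rightarrow> real) \<Rightarrow> real" where
  "mean_coal_time n c T =
     (\<Sum>b<n. \<Sum>a<b. coal_time n c T a b) / real (n choose 2)"

definition yule_height :: "nat \<Rightarrow> (nat \<Rightarrow> real) \<Rightarrow> real" where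
  "yule_height n T = (\<Sum>i=1..n. T i)"

definition yule_times :: "nat \<Rightarrow> (nat \<Rightarrow> real) measure" where
  "yule_times n = (\<Pi>\<^sub>M i\<in>{1..n}. density lborel (exponential_density (real i)))"

definition yule_space :: "nat \<Rightarrow> ((nat \<Rightarrow> nat) \<times> (nat \<Rightarrow> real)) measure" where
  "yule_space n = uniform_count_measure (yule_topologies n) \<Otimes>\<^sub>M yule_times n"

end

theory Submission
  imports Defs
begin

(* A pair of tips splitting at event kappa has coalescent time U - (T_1 + ... + T_kappa), so
   U - E[tau | Y_n] = sum_j T_j p_j, where p_j is the fraction of pairs of tips whose lineages are
   still joined while there are j lineages (j <= kappa).  The topology is independent of the
   interval lengths and E[T_i T_j] = (1 + [i = j]) / (i j), so everything reduces to E[p_j].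
   Count ordered pairs of tips having a common ancestor among the j lineages: attaching tip n to a
   uniformly chosen parent l adds 2 |class of l| + 1 such pairs, so the average count obeys a
   linear recursion in n, which gives E[p_j] = 2 (n - j) / ((j + 1) (n - 1)).  The remaining
   double sum telescopes into harmonic numbers. *)

lemma anc_steps_Suc_tips:
  "anc_steps c (Suc n) x (Suc j) = anc_steps c n (lineage_down c n x) j"
  by (induction j) auto

lemma anc_steps_fun_upd:
  "0 < n \<Longrightarrow> n \<le> m \<Longrightarrow> anc_steps (c(m := v)) n x j = anc_steps c n x j"
  by (induction j) (auto simp: lineage_down_def)

lemma ancestor_Suc_tips:
  "k \<le> n \<Longrightarrow> ancestor c (Suc n) k x = ancestor c n k (lineage_down c n x)"
proof -
  assume "k \<le> n"
  then have "Suc n - k = Suc (n - k)" by simp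
  then show ?thesis by (simp only: ancestor_def anc_steps_Suc_tips)
qed

lemma ancestor_fun_upd:
  "0 < n \<Longrightarrow> n \<le> m \<Longrightarrow> ancestor (c(m := v)) n k x = ancestor c n k x"
  by (simp add: ancestor_def anc_steps_fun_upd)

lemma ancestor_self [simp]: "ancestor c n n x = x"
  by (simp add: ancestor_def)

lemma ancestor_Suc_level:
  "Suc k \<le> n \<Longrightarrow> ancestor c n k x = lineage_down c k (ancestor c n (Suc k) x)"
proof -
  assume "Suc k \<le> n"
  then have "n - k = Suc (n - Suc k)" "n - Suc (n - Suc k) = k" by simp_all
  then show ?thesis by (simp add: ancestor_def)
qed

lemma ancestor_less:
  assumes c: "c \<in> yule_topologies n" and x: "x < n" and k: "1 \<le> k" "k \<le> n"
  shows "ancestor c n k x < k"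
  using k(2)
proof (induction k rule: inc_induct)
  case base
  then show ?case using x by simp
next
  case (step m)
  then have "c m < m" using c k by (auto simp: yule_topologies_def)
  moreover have "ancestor c n m x = lineage_down c m (ancestor c n (Suc m) x)"
    using step.hyps by (intro ancestor_Suc_level) simp
  ultimately show ?case using step.IH by (auto simp: lineage_down_def)
qed

lemma ancestor_eq_mono:
  assumes "ancestor c n k a = ancestor c n k b" "k \<le> n" "k' \<le> k"
  shows "ancestor c n k' a = ancestor c n k' b"
  using assms(3)
proof (induction k' rule: inc_induct)
  case (step m)
  then show ?case using assms(2) by (simp add: ancestor_Suc_level[of m n c])
qed (use assms(1) in simp)

lemma le_split_event_iff:
  assumes c: "c \<in> yule_topologies n" and ab: "a < n" "b < n" "a \<noteq> b"
    and j: "1 \<le> j" "j \<le> n"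
  shows "j \<le> split_event c n a b \<longleftrightarrow> ancestor c n j a = ancestor c n j b"
proof -
  define S where "S = {k \<in> {1..n-1}. ancestor c n k a = ancestor c n k b}"
  have "ancestor c n 1 a = 0" "ancestor c n 1 b = 0"
    using ancestor_less[OF c, of _ 1] ab by auto
  then have "1 \<in> S" using ab by (auto simp: S_def)
  then have "S \<noteq> {}" by auto
  moreover have "finite S" by (simp add: S_def)
  ultimately have Max_S: "Max S \<in> S" "\<And>k. k \<in> S \<Longrightarrow> k \<le> Max S"
    by simp_all
  have "split_event c n a b = Max S" by (simp add: split_event_def S_def)
  moreover have "j \<le> Max S \<longleftrightarrow> ancestor c n j a = ancestor c n j b"
  proof
    assume "j \<le> Max S"
    moreover have "ancestor c n (Max S) a = ancestor c n (Max S) b" "Max S \<le> n - 1"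
      using Max_S(1) by (simp_all add: S_def)
    ultimately show "ancestor c n j a = ancestor c n j b"
      using ancestor_eq_mono[of c n "Max S" a b j] by simp
  next
    assume eq: "ancestor c n j a = ancestor c n j b"
    have "j \<noteq> n"
    proof
      assume "j = n"
      with eq ab show False by simp
    qed
    with eq j have "j \<in> S" by (simp add: S_def)
    then show "j \<le> Max S" by (rule Max_S(2))
  qed
  ultimately show ?thesis by simp
qed

definition related_pairs :: "nat \<Rightarrow> nat \<Rightarrow> (nat \<Rightarrow> nat) \<Rightarrow> real" where
  "related_pairs n k c = (\<Sum>a<n. \<Sum>b<n. of_bool (ancestor c n k a = ancestor c n k b))"

lemma finite_yule_topologies: "finite (yule_topologies n)"
  by (simp add: yule_topologies_def finite_PiE)

lemma card_yule_topologies: "card (yule_topologies n) = fact (n - 1)"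
  by (simp add: yule_topologies_def card_PiE fact_prod)

lemma sum_yule_topologies_Suc:
  assumes "1 \<le> n"
  shows "sum f (yule_topologies (Suc n)) = (\<Sum>c\<in>yule_topologies n. \<Sum>l<n. f (c(n := l)))"
proof -
  let ?g = "\<lambda>(l, c). c(n := l)"
  have "{1..Suc n - 1} = insert n {1..n - 1}" using assms by auto
  then have "yule_topologies (Suc n) = ?g ` ({..<n} \<times> yule_topologies n)"
    by (simp only: yule_topologies_def PiE_insert_eq)
  moreover have "inj_on ?g ({..<n} \<times> yule_topologies n)"
    unfolding yule_topologies_def by (intro inj_combinator) auto
  ultimately have "sum f (yule_topologies (Suc n)) = (\<Sum>(l, c)\<in>{..<n} \<times> yule_topologies n. f (c(n := l)))"
    by (simp add: sum.reindex prod.case_distrib)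
  also have "\<dots> = (\<Sum>c\<in>yule_topologies n. \<Sum>l<n. f (c(n := l)))"
    by (simp add: sum.cartesian_product [symmetric] sum.swap [of _ "{..<n}"])
  finally show ?thesis .
qed

lemma related_pairs_fun_upd_Suc:
  assumes "1 \<le> k" "k \<le> n"
  shows "related_pairs (Suc n) k (c(n := l)) = related_pairs n k c
     + 2 * (\<Sum>a<n. of_bool (ancestor c n k a = ancestor c n k l)) + 1"
proof -
  define g where "g = ancestor c n k"
  have "ancestor (c(n := l)) (Suc n) k a = g (if a = n then l else a)" for a
    using assms by (simp add: ancestor_Suc_tips ancestor_fun_upd g_def lineage_down_def)
  then have "related_pairs (Suc n) k (c(n := l)) = (\<Sum>a<n. \<Sum>b<n. of_bool (g a = g b))
     + (\<Sum>a<n. of_bool (g a = g l)) + (\<Sum>b<n. of_bool (g l = g b)) + 1"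
    by (simp add: related_pairs_def sum.distrib)
  then show ?thesis by (simp add: related_pairs_def g_def eq_commute)
qed

lemma sum_related_pairs:
  assumes k: "1 \<le> k" "k \<le> n"
  shows "(\<Sum>c\<in>yule_topologies n. related_pairs n k c)
    = fact (n - 1) * real n * (2 * real n + 1 - real k) / (real k + 1)"
  using k(2)
proof (induction n rule: dec_induct)
  case base
  have "related_pairs k k c = real k" for c
    by (simp add: related_pairs_def)
  then show ?case using k by (simp add: card_yule_topologies field_simps)
next
  case (step m)
  have "(\<Sum>l<m. related_pairs (Suc m) k (c(m := l))) = (real m + 2) * related_pairs m k c + real m"
    for c
  proof -
    have "(\<Sum>l<m. related_pairs (Suc m) k (c(m := l))) = real m * related_pairs m k c
        + 2 * (\<Sum>l<m. \<Sum>a<m. of_bool (ancestor c m k a = ancestor c m k l)) + real m"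
      using k step.hyps by (simp add: related_pairs_fun_upd_Suc sum.distrib sum_distrib_left)
    also have "(\<Sum>l<m. \<Sum>a<m. of_bool (ancestor c m k a = ancestor c m k l)) = related_pairs m k c"
      unfolding related_pairs_def by (rule sum.swap)
    finally show ?thesis by (simp only: algebra_simps)
  qed
  then have "(\<Sum>c\<in>yule_topologies (Suc m). related_pairs (Suc m) k c)
      = (real m + 2) * (\<Sum>c\<in>yule_topologies m. related_pairs m k c) + real m * fact (m - 1)"
    using k step.hyps
    by (simp add: sum_yule_topologies_Suc sum.distrib sum_distrib_left card_yule_topologies)
  moreover have "fact m = real m * fact (m - 1)"
    using k step.hyps by (simp add: fact_reduce)
  ultimately show ?case by (simp add: step.IH field_simps)
qed

lemma sum_square_symmetric:
  fixes f :: "nat \<Rightarrow> nat \<Rightarrow> 'a::comm_semiring_1"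
  assumes "\<And>a b. f a b = f b a"
  shows "(\<Sum>a<n. \<Sum>b<n. f a b) = 2 * (\<Sum>b<n. \<Sum>a<b. f a b) + (\<Sum>a<n. f a a)"
proof (induction n)
  case (Suc n)
  have "(\<Sum>a<Suc n. \<Sum>b<Suc n. f a b)
      = (\<Sum>a<n. \<Sum>b<n. f a b) + (\<Sum>a<n. f a n) + (\<Sum>b<n. f n b) + f n n"
    by (simp add: sum.distrib add_ac)
  also have "(\<Sum>b<n. f n b) = (\<Sum>a<n. f a n)"
    using assms by simp
  finally show ?case using Suc by (simp add: algebra_simps mult_2)
qed simp

(* The p_j above: the conditional probability, given the tree, that the random pair still has a
   single ancestral lineage during the interval T_j. *)
definition joined_fraction :: "nat \<Rightarrow> nat \<Rightarrow> (nat \<Rightarrow> nat) \<Rightarrow> real" where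
  "joined_fraction n j c =
     (\<Sum>b<n. \<Sum>a<b. of_bool (j \<le> split_event c n a b)) / real (n choose 2)"

lemma joined_pairs_eq_related_pairs:
  assumes c: "c \<in> yule_topologies n" and j: "1 \<le> j" "j \<le> n"
  shows "(\<Sum>b<n. \<Sum>a<b. of_bool (j \<le> split_event c n a b)) = (related_pairs n j c - real n) / 2"
proof -
  have "(\<Sum>b<n. \<Sum>a<b. of_bool (j \<le> split_event c n a b))
      = (\<Sum>b<n. \<Sum>a<b. of_bool (ancestor c n j a = ancestor c n j b) :: real)"
    using le_split_event_iff[OF c _ _ _ j] by (intro sum.cong refl) auto
  moreover have "related_pairs n j c
      = 2 * (\<Sum>b<n. \<Sum>a<b. of_bool (ancestor c n j a = ancestor c n j b)) + real n"
    unfolding related_pairs_def by (subst sum_square_symmetric) auto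
  ultimately show ?thesis by simp
qed

lemma real_choose_two: "real (n choose 2) = real n * (real n - 1) / 2"
  by (induction n) (simp_all add: numeral_2_eq_2 field_simps)

lemma sum_joined_fraction:
  assumes n: "n \<ge> 2" and j: "1 \<le> j" "j \<le> n"
  shows "(\<Sum>c\<in>yule_topologies n. joined_fraction n j c) / fact (n - 1)
       = 2 * (real n - real j) / ((real j + 1) * (real n - 1))"
proof -
  have pos: "real n > 0" "real n - 1 > 0" "real j + 1 > 0" "(fact (n - 1) :: real) > 0"
    using n by auto
  have "joined_fraction n j c = (related_pairs n j c - real n) / (real n * (real n - 1))"
    if "c \<in> yule_topologies n" for c
    unfolding joined_fraction_def joined_pairs_eq_related_pairs[OF that j] real_choose_two
    by (simp only: divide_divide_eq_left)
  then have "(\<Sum>c\<in>yule_topologies n. joined_fraction n j c)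
      = (\<Sum>c\<in>yule_topologies n. related_pairs n j c - real n) / (real n * (real n - 1))"
    by (simp add: sum_divide_distrib)
  also have "(\<Sum>c\<in>yule_topologies n. related_pairs n j c - real n)
      = fact (n - 1) * real n * (2 * (real n - real j)) / (real j + 1)"
    using pos by (simp add: sum_subtractf sum_related_pairs[OF j] card_yule_topologies field_simps)
  also have "\<dots> / (real n * (real n - 1))
      = fact (n - 1) * (2 * (real n - real j) / ((real j + 1) * (real n - 1)))"
    using pos by (simp add: divide_simps)
  finally show ?thesis
    by simp
qed

lemma coal_time_eq_height_minus:
  "coal_time n c T a b
     = yule_height n T - (\<Sum>j=1..n. T j * of_bool (j \<le> split_event c n a b))"
proof -
  let ?k = "split_event c n a b"
  have "{?k + 1..n} = {j \<in> {1..n}. ?k < j}" by auto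
  then have "coal_time n c T a b = (\<Sum>j=1..n. if ?k < j then T j else 0)"
    by (simp only: coal_time_def sum.inter_filter[OF finite_atLeastAtMost])
  also have "\<dots> = (\<Sum>j=1..n. T j - T j * of_bool (j \<le> ?k))"
    by (intro sum.cong refl) auto
  finally show ?thesis
    by (simp only: yule_height_def sum_subtractf)
qed

lemma sum_lessThan_choose_two: "(\<Sum>b<n. b) = n choose 2"
  by (induction n) (simp_all add: numeral_2_eq_2)

lemma height_minus_mean_coal_time:
  assumes "n \<ge> 2"
  shows "yule_height n T - mean_coal_time n c T = (\<Sum>j=1..n. T j * joined_fraction n j c)"
proof -
  define C where "C = real (n choose 2)"
  define J where "J j = (\<Sum>b<n. \<Sum>a<b. of_bool (j \<le> split_event c n a b) :: real)" for j
  have "C \<noteq> 0" using assms by (simp add: C_def)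
  have "(\<Sum>b<n. \<Sum>a<b. coal_time n c T a b)
      = (\<Sum>b<n. \<Sum>a<b. yule_height n T - (\<Sum>j=1..n. T j * of_bool (j \<le> split_event c n a b)))"
    by (simp only: coal_time_eq_height_minus)
  also have "\<dots> = C * yule_height n T - (\<Sum>b<n. \<Sum>a<b. \<Sum>j=1..n. T j * of_bool (j \<le> split_event c n a b))"
    by (simp add: sum_subtractf C_def sum_distrib_right[symmetric] flip: of_nat_sum sum_lessThan_choose_two)
  also have "(\<Sum>b<n. \<Sum>a<b. \<Sum>j=1..n. T j * of_bool (j \<le> split_event c n a b))
      = (\<Sum>b<n. \<Sum>j=1..n. \<Sum>a<b. T j * of_bool (j \<le> split_event c n a b))"
    by (intro sum.cong refl sum.swap)
  also have "\<dots> = (\<Sum>j=1..n. \<Sum>b<n. \<Sum>a<b. T j * of_bool (j \<le> split_event c n a b))"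
    by (rule sum.swap)
  also have "\<dots> = (\<Sum>j=1..n. T j * J j)"
    by (simp only: J_def sum_distrib_left)
  finally have "mean_coal_time n c T = yule_height n T - (\<Sum>j=1..n. T j * J j) / C"
    using \<open>C \<noteq> 0\<close> by (simp add: mean_coal_time_def C_def[symmetric] diff_divide_distrib)
  then show ?thesis
    unfolding joined_fraction_def J_def[symmetric] C_def[symmetric] by (simp add: sum_divide_distrib)
qed

lemma H_Suc: "H (Suc n) r = H n r + 1 / real (Suc n) ^ r"
  by (simp add: H_def)

lemma sum_inverse_mult_Suc: "(\<Sum>j=1..n. 1 / (real j * (real j + 1))) = real n / (real n + 1)"
proof (induction n)
  case (Suc n)
  have "real n + 1 > 0" "real n + 2 > 0" by simp_all
  then have "real n / (real n + 1) + 1 / ((real n + 1) * (real n + 2)) = (real n + 1) / (real n + 2)"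
    by (simp add: divide_simps) (simp add: algebra_simps)
  with Suc show ?case by (simp add: add.commute)
qed simp

lemma sum_inverse_square_mult_Suc:
  "(\<Sum>j=1..n. 1 / (real j ^ 2 * (real j + 1))) = H n 2 - 1 + 1 / (real n + 1)"
proof (induction n)
  case (Suc n)
  have "real n + 1 > 0" "real n + 2 > 0" by simp_all
  then have "1 / (real n + 1) + 1 / ((real n + 1) ^ 2 * (real n + 2))
      = 1 / (real n + 1) ^ 2 + 1 / (real n + 2)"
    by (simp add: divide_simps) (simp add: algebra_simps power2_eq_square)
  with Suc show ?case by (simp add: H_Suc add.commute)
qed (simp add: H_def)

lemma sum_diff_div_mult_Suc:
  "(\<Sum>j=1..n. (real n - real j) / (real j * (real j + 1))) = real n - H n 1"
proof (induction n)
  case (Suc n)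
  have "(\<Sum>j=1..Suc n. (real (Suc n) - real j) / (real j * (real j + 1)))
      = (\<Sum>j=1..n. (real (Suc n) - real j) / (real j * (real j + 1)))"
    by simp
  also have "\<dots> = (\<Sum>j=1..n. (real n - real j) / (real j * (real j + 1)) + 1 / (real j * (real j + 1)))"
    by (intro sum.cong refl) (simp_all add: diff_divide_distrib add_divide_distrib algebra_simps)
  also have "\<dots> = real n - H n 1 + real n / (real n + 1)"
    using Suc sum_inverse_mult_Suc[of n] by (simp add: sum.distrib)
  also have "\<dots> = real (Suc n) - H (Suc n) 1"
  proof -
    have "real n + 1 > 0" by simp
    then show ?thesis by (simp add: H_Suc divide_simps) (simp add: algebra_simps)
  qed
  finally show ?case .
qed (simp add: H_def)

lemma sum_diff_div_square_mult_Suc: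
  "(\<Sum>j=1..n. (real n - real j) / (real j ^ 2 * (real j + 1))) = real n * H n 2 - real n"
proof (induction n)
  case (Suc n)
  have "(\<Sum>j=1..Suc n. (real (Suc n) - real j) / (real j ^ 2 * (real j + 1)))
      = (\<Sum>j=1..n. (real (Suc n) - real j) / (real j ^ 2 * (real j + 1)))"
    by simp
  also have "\<dots> = (\<Sum>j=1..n. (real n - real j) / (real j ^ 2 * (real j + 1)) + 1 / (real j ^ 2 * (real j + 1)))"
    by (intro sum.cong refl) (simp_all add: diff_divide_distrib add_divide_distrib algebra_simps)
  also have "\<dots> = real n * H n 2 - real n + (H n 2 - 1 + 1 / (real n + 1))"
    using Suc sum_inverse_square_mult_Suc[of n] by (simp add: sum.distrib)
  also have "\<dots> = real (Suc n) * H (Suc n) 2 - real (Suc n)"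
  proof -
    have "real (Suc n) * (1 / real (Suc n) ^ 2) = 1 / (real n + 1)"
      by (simp add: power2_eq_square)
    then show ?thesis by (simp add: H_Suc distrib_left algebra_simps)
  qed
  finally show ?case .
qed (simp add: H_def)

lemma yule_moment_sum:
  assumes "n \<ge> 2"
  shows "(\<Sum>i=1..n. \<Sum>j=1..n. 2 * (real n - real j) / ((real j + 1) * (real n - 1))
            * ((if i = j then 2 else 1) / (real i * real j)))
       = 2 * real n / (real n - 1) * (H n 1 + H n 2 - 1 - (H n 1)^2 / real n)"
proof -
  have inner: "(\<Sum>i=1..n. (if i = j then 2 else 1) / (real i * real j))
      = H n 1 / real j + 1 / real j ^ 2" if "j \<in> {1..n}" for j
  proof -
    have "(\<Sum>i=1..n. (if i = j then 2 else 1) / (real i * real j))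
        = (\<Sum>i=1..n. 1 / (real i * real j) + (if i = j then 1 / real j ^ 2 else 0))"
      by (intro sum.cong refl) (simp add: power2_eq_square)
    then show ?thesis
      using that by (simp add: sum.distrib H_def sum_divide_distrib)
  qed
  have split: "2 * (real n - real j) / ((real j + 1) * (real n - 1)) * (H n 1 / real j + 1 / real j ^ 2)
      = 2 / (real n - 1) * (H n 1 * ((real n - real j) / (real j * (real j + 1)))
          + (real n - real j) / (real j ^ 2 * (real j + 1)))" if "j \<in> {1..n}" for j
  proof -
    have "real j > 0" "real j + 1 > 0" "real n - 1 > 0" using that assms by auto
    then show ?thesis by (simp add: divide_simps) (simp add: algebra_simps power2_eq_square)
  qed
  have "(\<Sum>i=1..n. \<Sum>j=1..n. 2 * (real n - real j) / ((real j + 1) * (real n - 1))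
            * ((if i = j then 2 else 1) / (real i * real j)))
      = (\<Sum>j=1..n. 2 * (real n - real j) / ((real j + 1) * (real n - 1))
            * (\<Sum>i=1..n. (if i = j then 2 else 1) / (real i * real j)))"
    by (subst sum.swap) (simp only: sum_distrib_left)
  also have "\<dots> = (\<Sum>j=1..n. 2 / (real n - 1) * (H n 1 * ((real n - real j) / (real j * (real j + 1)))
            + (real n - real j) / (real j ^ 2 * (real j + 1))))"
    by (intro sum.cong refl) (simp only: inner split)
  also have "\<dots> = 2 / (real n - 1) * (H n 1 * (real n - H n 1) + (real n * H n 2 - real n))"
    by (simp only: sum.distrib sum_distrib_left[symmetric] sum_diff_div_mult_Suc
        sum_diff_div_square_mult_Suc)
  also have "\<dots> = 2 * real n / (real n - 1) * (H n 1 + H n 2 - 1 - (H n 1)^2 / real n)"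
    using assms by (simp add: field_simps power2_eq_square)
  finally show ?thesis .
qed

lemma sigma_finite_density_exponential:
  "sigma_finite_measure (density lborel (exponential_density l))"
  by (subst sigma_finite_measure.sigma_finite_iff_density_finite[OF sigma_finite_lborel]) auto

lemma has_bochner_integral_exponential_power:
  assumes "0 < l"
  shows "has_bochner_integral (density lborel (exponential_density l)) (\<lambda>x. x ^ m) (fact m / l ^ m)"
proof -
  interpret prob_space "density lborel (exponential_density l)"
    using assms by (rule prob_space_exponential_density)
  have "distributed (density lborel (exponential_density l)) lborel (\<lambda>x. x) (exponential_density l)"
    by (auto simp: distributed_def distr_id2 measurable_ident_sets)
  from has_bochner_integral_erlang_ith_moment[OF assms this, of m] show ?thesis
    by simp
qed

lemma sigma_finite_yule_times: "sigma_finite_measure (yule_times n)"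
proof -
  interpret finite_product_sigma_finite "\<lambda>i. density lborel (exponential_density (real i))" "{1..n}"
    by (simp add: finite_product_sigma_finite_def product_sigma_finite_def
        finite_product_sigma_finite_axioms_def sigma_finite_density_exponential)
  show ?thesis
    unfolding yule_times_def by (rule sigma_finite_measure_axioms)
qed

lemma
  assumes i: "i \<in> {1..n}" and j: "j \<in> {1..n}"
  shows integrable_yule_times_mult: "integrable (yule_times n) (\<lambda>T. T i * T j)"
    and integral_yule_times_mult:
      "(\<integral>T. T i * T j \<partial>yule_times n) = (if i = j then 2 else 1) / (real i * real j)"
proof -
  define M where "M = (\<lambda>k::nat. density lborel (exponential_density (real k)))"
  interpret product_sigma_finite M
    by (simp add: product_sigma_finite_def M_def sigma_finite_density_exponential)
  define e :: "nat \<Rightarrow> nat" where "e k = of_bool (k = i) + of_bool (k = j)" for k :: nat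
  have moment: "has_bochner_integral (M k) (\<lambda>x. x ^ e k) (fact (e k) / real k ^ e k)"
    if "k \<in> {1..n}" for k
    using that unfolding M_def by (intro has_bochner_integral_exponential_power) simp
  have prod_eq: "(\<Prod>k\<in>{1..n}. T k ^ e k) = T i * T j" for T :: "nat \<Rightarrow> real"
  proof -
    have "\<And>x :: real. x ^ of_bool P = (if P then x else 1)" for P by simp
    then show ?thesis using i j by (simp add: e_def power_add prod.distrib prod.delta)
  qed
  have yt: "yule_times n = Pi\<^sub>M {1..n} M" by (simp add: yule_times_def M_def)
  have "integrable (Pi\<^sub>M {1..n} M) (\<lambda>T. \<Prod>k\<in>{1..n}. T k ^ e k)"
    using moment by (intro product_integrable_prod) (auto simp: has_bochner_integral_iff)
  then show "integrable (yule_times n) (\<lambda>T. T i * T j)"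
    by (simp only: yt prod_eq)
  have "(\<integral>T. T i * T j \<partial>yule_times n) = (\<integral>T. (\<Prod>k\<in>{1..n}. T k ^ e k) \<partial>Pi\<^sub>M {1..n} M)"
    by (simp only: yt prod_eq)
  also have "\<dots> = (\<Prod>k\<in>{1..n}. fact (e k) / real k ^ e k)"
    using moment by (subst product_integral_prod) (auto simp: has_bochner_integral_iff intro!: prod.cong)
  also have "\<dots> = (if i = j then 2 else 1) / (real i * real j)"
  proof (cases "i = j")
    case True
    then have "(\<Prod>k\<in>{1..n}. fact (e k) / real k ^ e k) = (\<Prod>k\<in>{1..n}. if k = i then 2 / real k ^ 2 else 1)"
      by (intro prod.cong refl) (simp add: e_def numeral_2_eq_2)
    then show ?thesis using True i by (simp add: prod.delta power2_eq_square)
  next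
    case False
    then have "(\<Prod>k\<in>{1..n}. fact (e k) / real k ^ e k)
        = (\<Prod>k\<in>{1..n}. (if k = i then 1 / real k else 1) * (if k = j then 1 / real k else 1))"
      by (intro prod.cong refl) (auto simp: e_def)
    then show ?thesis using False i j by (simp add: prod.distrib prod.delta)
  qed
  finally show "(\<integral>T. T i * T j \<partial>yule_times n) = (if i = j then 2 else 1) / (real i * real j)" .
qed

lemma
  fixes f :: "'a \<Rightarrow> real" and g :: "'b \<Rightarrow> real"
  assumes "sigma_finite_measure M1" "sigma_finite_measure M2"
    and f: "integrable M1 f" and g: "integrable M2 g"
  shows integrable_pair_measure_mult: "integrable (M1 \<Otimes>\<^sub>M M2) (\<lambda>x. f (fst x) * g (snd x))"
    and integral_pair_measure_mult:
      "(\<integral>x. f (fst x) * g (snd x) \<partial>(M1 \<Otimes>\<^sub>M M2)) = integral\<^sup>L M1 f * integral\<^sup>L M2 g"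
proof -
  interpret pair_sigma_finite M1 M2
    using assms(1,2) by (simp add: pair_sigma_finite_def)
  have [measurable]: "f \<in> borel_measurable M1" "g \<in> borel_measurable M2"
    using f g by simp_all
  show int: "integrable (M1 \<Otimes>\<^sub>M M2) (\<lambda>x. f (fst x) * g (snd x))"
  proof (rule Fubini_integrable)
    have "integrable M1 (\<lambda>x. \<bar>f x\<bar> * (\<integral>y. \<bar>g y\<bar> \<partial>M2))"
      using f by simp
    then show "integrable M1 (\<lambda>x. \<integral>y. norm (f (fst (x, y)) * g (snd (x, y))) \<partial>M2)"
      by (simp add: abs_mult)
  qed (use g in simp_all)
  show "(\<integral>x. f (fst x) * g (snd x) \<partial>(M1 \<Otimes>\<^sub>M M2)) = integral\<^sup>L M1 f * integral\<^sup>L M2 g"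
    using integral_fst'[OF int, symmetric] by simp
qed

lemma
  fixes f :: "(nat \<Rightarrow> nat) \<Rightarrow> real"
  assumes "i \<in> {1..n}" "j \<in> {1..n}"
  shows integrable_yule_space_mult: "integrable (yule_space n) (\<lambda>(c, T). f c * (T i * T j))"
    and integral_yule_space_mult: "(\<integral>(c, T). f c * (T i * T j) \<partial>yule_space n)
      = (\<Sum>c\<in>yule_topologies n. f c) / fact (n - 1) * ((if i = j then 2 else 1) / (real i * real j))"
proof -
  let ?U = "uniform_count_measure (yule_topologies n)"
  have "yule_topologies n \<noteq> {}"
    using card_yule_topologies[of n] by auto
  then have sigma_finite: "sigma_finite_measure ?U"
    by (intro prob_space_imp_sigma_finite prob_space_uniform_count_measure finite_yule_topologies)
  have integrable: "integrable ?U f"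
    unfolding uniform_count_measure_def by (rule integrable_point_measure_finite[OF finite_yule_topologies])
  note * = sigma_finite sigma_finite_yule_times integrable integrable_yule_times_mult[OF assms]
  show "integrable (yule_space n) (\<lambda>(c, T). f c * (T i * T j))"
    using integrable_pair_measure_mult[OF *] by (simp add: yule_space_def case_prod_beta')
  show "(\<integral>(c, T). f c * (T i * T j) \<partial>yule_space n)
      = (\<Sum>c\<in>yule_topologies n. f c) / fact (n - 1) * ((if i = j then 2 else 1) / (real i * real j))"
    using integral_pair_measure_mult[OF *] integral_yule_times_mult[OF assms]
    by (simp add: yule_space_def case_prod_beta' integral_uniform_count_measure[OF finite_yule_topologies]
        card_yule_topologies)
qed

lemma integral_yule_space_sum_mult:
  fixes w :: "nat \<Rightarrow> (nat \<Rightarrow> nat) \<Rightarrow> real"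
  shows "(\<integral>(c, T). (\<Sum>i=1..n. \<Sum>j=1..n. w j c * (T i * T j)) \<partial>yule_space n)
    = (\<Sum>i=1..n. \<Sum>j=1..n. (\<Sum>c\<in>yule_topologies n. w j c) / fact (n - 1)
         * ((if i = j then 2 else 1) / (real i * real j)))"
proof -
  let ?t = "\<lambda>i j (c, T). w j c * (T i * T j)"
  have int: "integrable (yule_space n) (?t i j)" if "i \<in> {1..n}" "j \<in> {1..n}" for i j
    using integrable_yule_space_mult[OF that] .
  have "(\<integral>(c, T). (\<Sum>i=1..n. \<Sum>j=1..n. w j c * (T i * T j)) \<partial>yule_space n)
      = (\<integral>\<omega>. (\<Sum>i=1..n. \<Sum>j=1..n. ?t i j \<omega>) \<partial>yule_space n)"
    by (intro Bochner_Integration.integral_cong) (auto split: prod.splits)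
  also have "\<dots> = (\<Sum>i=1..n. \<Sum>j=1..n. \<integral>\<omega>. ?t i j \<omega> \<partial>yule_space n)"
    by (subst Bochner_Integration.integral_sum)
      (use int in \<open>auto intro!: sum.cong Bochner_Integration.integral_sum Bochner_Integration.integrable_sum\<close>)
  finally show ?thesis
    by (simp only: integral_yule_space_mult cong: sum.cong)
qed

lemma height_mult_height_minus_mean_coal_time:
  assumes "n \<ge> 2"
  shows "yule_height n T * (yule_height n T - mean_coal_time n c T)
    = (\<Sum>i=1..n. \<Sum>j=1..n. joined_fraction n j c * (T i * T j))"
proof -
  have "yule_height n T * (yule_height n T - mean_coal_time n c T)
      = yule_height n T * (\<Sum>j=1..n. T j * joined_fraction n j c)"
    by (simp only: height_minus_mean_coal_time[OF assms])
  then show ?thesis by (simp add: yule_height_def sum_product ac_simps)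
qed

theorem lemmaY4p4:
  fixes n :: nat
  assumes "n \<ge> 2"
  shows "(\<integral>\<omega>. (case \<omega> of (c, T) \<Rightarrow>
            yule_height n T * (yule_height n T - mean_coal_time n c T)) \<partial>yule_space n)
         = 2 * real n / (real n - 1) * (H n 1 + H n 2 - 1 - (H n 1)^2 / real n)"
proof -
  have mean_joined: "(\<Sum>c\<in>yule_topologies n. joined_fraction n j c) / fact (n - 1)
      = 2 * (real n - real j) / ((real j + 1) * (real n - 1))" if "j \<in> {1..n}" for j
    using that by (intro sum_joined_fraction[OF assms]) auto
  have "(\<integral>\<omega>. (case \<omega> of (c, T) \<Rightarrow>
            yule_height n T * (yule_height n T - mean_coal_time n c T)) \<partial>yule_space n)
      = (\<integral>(c, T). (\<Sum>i=1..n. \<Sum>j=1..n. joined_fraction n j c * (T i * T j)) \<partial>yule_space n)"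
    by (simp only: height_mult_height_minus_mean_coal_time[OF assms])
  also have "\<dots> = (\<Sum>i=1..n. \<Sum>j=1..n. 2 * (real n - real j) / ((real j + 1) * (real n - 1))
            * ((if i = j then 2 else 1) / (real i * real j)))"
    by (simp only: integral_yule_space_sum_mult mean_joined cong: sum.cong)
  also have "\<dots> = 2 * real n / (real n - 1) * (H n 1 + H n 2 - 1 - (H n 1)^2 / real n)"
    by (rule yule_moment_sum[OF assms])
  finally show ?thesis .
qed

end
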